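(* Let $X=(-\frac12,\frac12)^{\mathbb N}$ with the product $\sigma$-algebra and the product probability measure $\mu$ generated by Lebesgue measure on $(-\frac12,\frac12)$. Then (1) $\mu(S_0\cap X)=1$, and (2) $\mu(\widehat{c}\cap X)=0$.
   Context: A Banach limit is a linear functional $L\colon\ell^\infty\to\mathbb R$ on the space $\ell^\infty$ of bounded real sequences such that for every $(x_n)\in\ell^\infty$: (1) if $x_n\ge0$ for all $n$ then $L((x_n))\ge0$; (2) $L((x_2,x_3,\dots))=L((x_1,x_2,\dots))$; (3) $L((1,1,\dots))=1$. $\widehat{c}$ is the set of $x\in\ell^\infty$ for which there is $s\in\mathbb R$ with $L(x)=s$ for every Banach limit $L$. $S_0=\{x\in\ell^\infty\colon\lim_n\frac{x_1+\dots+x_n}{n}=0\}$. *)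

theory Defs
  imports "HOL-Probability.Probability"
begin

text \<open>Bounded real sequences (the space l-infinity) are functions nat => real with Bseq.
  Sequences are indexed from 0 instead of 1.\<close>

definition banach_limit :: "((nat \<Rightarrow> real) \<Rightarrow> real) \<Rightarrow> bool" where
  "banach_limit L \<longleftrightarrow>
     (\<forall>x y a b. Bseq x \<longrightarrow> Bseq y \<longrightarrow> L (\<lambda>n. a * x n + b * y n) = a * L x + b * L y) \<and>
     (\<forall>x. Bseq x \<longrightarrow> (\<forall>n. x n \<ge> 0) \<longrightarrow> L x \<ge> 0) \<and>
     (\<forall>x. Bseq x \<longrightarrow> L (\<lambda>n. x (Suc n)) = L x) \<and>
     L (\<lambda>n. 1) = 1"

definition c_hat :: "(nat \<Rightarrow> real) set" where
  "c_hat = {x. Bseq x \<and> (\<exists>s. \<forall>L. banach_limit L \<longrightarrow> L x = s)}"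

definition S0 :: "(nat \<Rightarrow> real) set" where
  "S0 = {x. Bseq x \<and> (\<lambda>n. (\<Sum>i<n. x i) / real n) \<longlonglongrightarrow> 0}"

definition unif_half :: "real measure" where
  "unif_half = restrict_space lborel {-1/2<..<1/2}"

definition mu :: "(nat \<Rightarrow> real) measure" where
  "mu = PiM UNIV (\<lambda>_. unif_half)"

end

theory Submission
  imports Defs
begin

text \<open>A bounded sequence has a unique Banach limit iff its window averages
  \<open>(x n + \<dots> + x (n + m - 1)) / m\<close> become uniformly flat in \<open>n\<close> for suitable \<open>m\<close>:
  flatness pins every Banach limit down to within \<open>\<epsilon>\<close> of a single window average, while two
  families of windows whose averages stay apart give, as ultrafilter limits of window averages,
  two Banach limits that differ. A sequence of independent uniform variables on \<open>(-1/2, 1/2)\<close>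
  almost surely contains arbitrarily long blocks in \<open>(1/4, 1/2)\<close> and in \<open>(-1/2, -1/4)\<close>, so it
  is almost surely not flat. That its Cesaro means tend to 0 almost surely is the strong law of
  large numbers, here from Hoeffding's inequality and the Borel-Cantelli lemma.\<close>

section \<open>Ultrafilters\<close>

definition is_ultrafilter :: "'a filter \<Rightarrow> bool" where
  "is_ultrafilter F \<longleftrightarrow> F \<noteq> bot \<and> (\<forall>P. eventually P F \<or> eventually (\<lambda>x. \<not> P x) F)"

lemma maximal_proper_filter_is_ultrafilter:
  assumes U: "U \<noteq> bot" and max: "\<And>G. G \<noteq> bot \<Longrightarrow> G \<le> U \<Longrightarrow> G = U"
  shows "is_ultrafilter U"
  unfolding is_ultrafilter_def
proof (intro conjI allI U)
  fix P
  show "eventually P U \<or> eventually (\<lambda>x. \<not> P x) U"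
  proof (rule disjCI)
    assume "\<not> eventually (\<lambda>x. \<not> P x) U"
    then have "inf U (principal {x. P x}) \<noteq> bot"
      unfolding trivial_limit_def eventually_inf_principal by simp
    then have "inf U (principal {x. P x}) = U" by (rule max) (rule inf_le1)
    moreover have "eventually P (inf U (principal {x. P x}))"
      by (simp add: eventually_inf_principal)
    ultimately show "eventually P U" by simp
  qed
qed

lemma ex_ultrafilter_le:
  fixes F :: "'a filter"
  assumes "F \<noteq> bot"
  shows "\<exists>U\<le>F. is_ultrafilter U"
proof -
  let ?A = "{G. G \<noteq> bot \<and> G \<le> F}"
  have "\<exists>U\<in>?A. \<forall>G\<in>?A. G \<le> U \<longrightarrow> G = U"
  proof (rule predicate_Zorn)
    show "partial_order_on ?A (relation_of (\<lambda>G H. H \<le> G) ?A)"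
      by (auto simp: partial_order_on_def preorder_on_def refl_on_def trans_def
          antisym_def relation_of_def)
  next
    fix C assume C: "C \<in> Chains (relation_of (\<lambda>G H. H \<le> G) ?A)"
    then have C_sub: "C \<subseteq> ?A" and chain: "\<And>G H. G \<in> C \<Longrightarrow> H \<in> C \<Longrightarrow> G \<le> H \<or> H \<le> G"
      by (auto simp: Chains_def relation_of_def)
    show "\<exists>U\<in>?A. \<forall>G\<in>C. U \<le> G"
    proof (cases "C = {}")
      case True
      then show ?thesis using assms by blast
    next
      case False
      have "\<exists>H\<in>C. H \<le> inf G G'" if "G \<in> C" "G' \<in> C" for G G'
        using chain[OF that] that by (metis inf.absorb1 inf.absorb2 order_refl)
      then have "eventually P (Inf C) \<longleftrightarrow> (\<exists>G\<in>C. eventually P G)" for P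
        using False by (intro eventually_Inf_base)
      then have "Inf C \<noteq> bot"
        using C_sub by (auto simp: trivial_limit_def)
      moreover obtain G where "G \<in> C" using False by blast
      then have "Inf C \<le> F" using C_sub by (blast intro: Inf_lower2)
      ultimately show ?thesis by (blast intro: Inf_lower)
    qed
  qed
  then obtain U where "U \<noteq> bot" "U \<le> F" "\<And>G. G \<noteq> bot \<Longrightarrow> G \<le> U \<Longrightarrow> G = U"
    by (metis (mono_tags, lifting) mem_Collect_eq order_trans)
  then show ?thesis by (blast intro: maximal_proper_filter_is_ultrafilter)
qed

lemma ultrafilter_tendsto_compact:
  fixes f :: "'a \<Rightarrow> 'b::topological_space"
  assumes U: "is_ultrafilter U" and K: "compact K" and f: "\<And>x. f x \<in> K"
  shows "\<exists>c. (f \<longlongrightarrow> c) U"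
proof -
  have "filtermap f U \<noteq> bot" using U by (simp add: is_ultrafilter_def filtermap_bot_iff)
  moreover have "eventually (\<lambda>y. y \<in> K) (filtermap f U)"
    using f by (simp add: eventually_filtermap)
  ultimately obtain c where c: "inf (nhds c) (filtermap f U) \<noteq> bot"
    using K unfolding compact_filter by blast
  have "eventually (\<lambda>x. f x \<in> S) U" if "open S" "c \<in> S" for S
  proof (rule ccontr)
    assume "\<not> eventually (\<lambda>x. f x \<in> S) U"
    then have "eventually (\<lambda>y. y \<notin> S) (filtermap f U)"
      using U by (auto simp: is_ultrafilter_def eventually_filtermap)
    moreover have "eventually (\<lambda>y. y \<in> S) (nhds c)" using that by (rule eventually_nhds_in_open)
    ultimately have "eventually (\<lambda>_. False) (inf (nhds c) (filtermap f U))"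
      unfolding eventually_inf by blast
    with c show False by (simp add: trivial_limit_def)
  qed
  then show ?thesis by (blast intro: topological_tendstoI)
qed

section \<open>Window averages and Banach limits\<close>

lemma Bseq_sum:
  fixes f :: "'i \<Rightarrow> nat \<Rightarrow> 'a::real_normed_vector"
  assumes "\<And>i. i \<in> A \<Longrightarrow> Bseq (f i)"
  shows "Bseq (\<lambda>n. \<Sum>i\<in>A. f i n)"
  using assms
proof (induction A rule: infinite_finite_induct)
  case (insert j A)
  then show ?case by (simp add: Bseq_eq_bounded bounded_plus_comp)
qed simp_all

lemma Bseq_linear_combination:
  fixes x y :: "nat \<Rightarrow> real"
  assumes "Bseq x" and "Bseq y"
  shows "Bseq (\<lambda>n. a * x n + b * y n)"
  using Bseq_mult[OF Bfun_const[of a] assms(1)] Bseq_mult[OF Bfun_const[of b] assms(2)]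
  by (simp add: Bseq_eq_bounded bounded_plus_comp)

definition window_avg :: "(nat \<Rightarrow> real) \<Rightarrow> nat \<Rightarrow> nat \<Rightarrow> real" where
  "window_avg x n m = (\<Sum>i<m. x (n + i)) / real m"

lemma window_avg_linear:
  "window_avg (\<lambda>k. a * x k + b * y k) n m = a * window_avg x n m + b * window_avg y n m"
  by (simp add: window_avg_def sum.distrib sum_distrib_left add_divide_distrib)

lemma window_avg_lower_bound:
  assumes "m > 0" and "\<And>i. i < m \<Longrightarrow> c \<le> x (n + i)"
  shows "c \<le> window_avg x n m"
proof -
  have "(\<Sum>i<m. c) \<le> (\<Sum>i<m. x (n + i))" using assms(2) by (intro sum_mono) auto
  then show ?thesis using assms(1) by (simp add: window_avg_def field_simps)
qed

lemma window_avg_upper_bound: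
  assumes "m > 0" and "\<And>i. i < m \<Longrightarrow> x (n + i) \<le> c"
  shows "window_avg x n m \<le> c"
proof -
  have "(\<Sum>i<m. x (n + i)) \<le> (\<Sum>i<m. c)" using assms(2) by (intro sum_mono) auto
  then show ?thesis using assms(1) by (simp add: window_avg_def field_simps)
qed

lemma window_avg_shift:
  assumes "m > 0"
  shows "window_avg (\<lambda>k. x (Suc k)) n m - window_avg x n m = (x (n + m) - x n) / real m"
proof -
  have "(\<Sum>i<m. x (Suc (n + i))) = (\<Sum>i<Suc m. x (n + i)) - x n"
    by (subst sum.lessThan_Suc_shift) simp
  then show ?thesis using assms by (simp add: window_avg_def field_simps)
qed

lemma Bseq_window_avg:
  assumes "Bseq x"
  shows "Bseq (\<lambda>n. window_avg x n m)"
  using Bseq_mult[OF Bseq_sum[of "{..<m}" "\<lambda>i n. x (n + i)"] Bfun_const[of "1 / real m"]]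
  by (simp add: window_avg_def Bseq_ignore_initial_segment[OF assms])

lemma banach_limit_linear:
  "banach_limit L \<Longrightarrow> Bseq x \<Longrightarrow> Bseq y \<Longrightarrow> L (\<lambda>n. a * x n + b * y n) = a * L x + b * L y"
  unfolding banach_limit_def by blast

lemma banach_limit_nonneg: "banach_limit L \<Longrightarrow> Bseq x \<Longrightarrow> (\<And>n. 0 \<le> x n) \<Longrightarrow> 0 \<le> L x"
  unfolding banach_limit_def by blast

lemma banach_limit_shift: "banach_limit L \<Longrightarrow> Bseq x \<Longrightarrow> L (\<lambda>n. x (Suc n)) = L x"
  unfolding banach_limit_def by blast

lemma banach_limit_one: "banach_limit L \<Longrightarrow> L (\<lambda>n. 1) = 1"
  unfolding banach_limit_def by blast

lemma banach_limit_const: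
  assumes "banach_limit L"
  shows "L (\<lambda>n. c) = c"
  using banach_limit_linear[OF assms, of "\<lambda>n. 1" "\<lambda>n. 1" c 0] banach_limit_one[OF assms]
  by simp

lemma banach_limit_sum:
  assumes L: "banach_limit L" and "finite A" and "\<And>i. i \<in> A \<Longrightarrow> Bseq (f i)"
  shows "L (\<lambda>n. \<Sum>i\<in>A. f i n) = (\<Sum>i\<in>A. L (f i))"
  using assms(2,3)
proof (induction A rule: finite_induct)
  case empty
  then show ?case using banach_limit_const[OF L, of 0] by simp
next
  case (insert j A)
  have "Bseq (\<lambda>n. \<Sum>i\<in>A. f i n)"
    using insert by (intro Bseq_sum) auto
  then show ?case
    using insert banach_limit_linear[OF L, of "f j" "\<lambda>n. \<Sum>i\<in>A. f i n" 1 1] by simp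
qed

lemma banach_limit_shift_by:
  assumes L: "banach_limit L" and x: "Bseq x"
  shows "L (\<lambda>n. x (n + k)) = L x"
proof (induction k)
  case (Suc k)
  then show ?case
    using banach_limit_shift[OF L Bseq_ignore_initial_segment[OF x, of k]] by simp
qed simp

lemma banach_limit_window_avg:
  assumes L: "banach_limit L" and x: "Bseq x" and "m > 0"
  shows "L (\<lambda>n. window_avg x n m) = L x"
proof -
  have sums: "Bseq (\<lambda>n. \<Sum>i<m. x (n + i))"
    using x by (intro Bseq_sum Bseq_ignore_initial_segment)
  have "L (\<lambda>n. window_avg x n m) = (1 / real m) * L (\<lambda>n. \<Sum>i<m. x (n + i))"
    using banach_limit_linear[OF L sums sums, of "1 / real m" 0] by (simp add: window_avg_def)
  also have "L (\<lambda>n. \<Sum>i<m. x (n + i)) = real m * L x"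
    using banach_limit_sum[OF L, of "{..<m}" "\<lambda>i n. x (n + i)"]
    by (simp add: banach_limit_shift_by[OF L x] Bseq_ignore_initial_segment[OF x])
  finally show ?thesis using \<open>m > 0\<close> by simp
qed

lemma banach_limit_lower_bound:
  assumes L: "banach_limit L" and x: "Bseq x" and c: "\<And>n. c \<le> x n"
  shows "c \<le> L x"
proof -
  have "0 \<le> L (\<lambda>n. x n - c)"
    using c Bseq_add[OF x, of "- c"] by (intro banach_limit_nonneg[OF L]) auto
  then show ?thesis
    using banach_limit_linear[OF L x Bfun_const[of 1], of 1 "- c"] banach_limit_one[OF L] by simp
qed

lemma banach_limit_upper_bound:
  assumes L: "banach_limit L" and x: "Bseq x" and c: "\<And>n. x n \<le> c"
  shows "L x \<le> c"
proof -
  have "- c \<le> L (\<lambda>n. (- 1) * x n + 0 * 0)"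
    using c by (intro banach_limit_lower_bound[OF L]) (auto simp: x Bseq_minus_iff)
  then show ?thesis using banach_limit_linear[OF L x Bfun_const[of 0], of "- 1" 0] by simp
qed

text \<open>The windows \<open>[w p, w p + p]\<close> grow, which makes this shift invariant; their positions
  \<open>w\<close> are free, which is what lets two such Banach limits differ.\<close>

definition window_banach_limit :: "nat filter \<Rightarrow> (nat \<Rightarrow> nat) \<Rightarrow> (nat \<Rightarrow> real) \<Rightarrow> real" where
  "window_banach_limit U w x = Lim U (\<lambda>p. window_avg x (w p) (Suc p))"

lemma tendsto_window_banach_limit:
  assumes U: "is_ultrafilter U" and x: "Bseq x"
  shows "((\<lambda>p. window_avg x (w p) (Suc p)) \<longlongrightarrow> window_banach_limit U w x) U"
proof -
  obtain B where B: "\<And>n. \<bar>x n\<bar> \<le> B"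
    using x by (auto simp: Bseq_def)
  then have "- B \<le> x n \<and> x n \<le> B" for n
    by (metis abs_le_iff minus_le_iff)
  then have "window_avg x (w p) (Suc p) \<in> {-B..B}" for p
    by (auto intro!: window_avg_lower_bound window_avg_upper_bound)
  then obtain c where "((\<lambda>p. window_avg x (w p) (Suc p)) \<longlongrightarrow> c) U"
    using ultrafilter_tendsto_compact[OF U compact_Icc, of "\<lambda>p. window_avg x (w p) (Suc p)"]
    by blast
  then show ?thesis
    using U by (simp add: window_banach_limit_def is_ultrafilter_def tendsto_Lim)
qed

lemma window_avg_shift_tendsto_zero:
  assumes x: "Bseq x"
  shows "((\<lambda>p. window_avg (\<lambda>n. x (Suc n)) (w p) (Suc p) - window_avg x (w p) (Suc p))
    \<longlongrightarrow> 0) sequentially"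
proof -
  obtain B where B: "\<And>n. \<bar>x n\<bar> \<le> B"
    using x by (auto simp: Bseq_def)
  have bound: "norm (window_avg (\<lambda>n. x (Suc n)) (w p) (Suc p) - window_avg x (w p) (Suc p))
      \<le> 2 * B / real (Suc p)" for p
  proof -
    have "\<bar>x (w p + Suc p) - x (w p)\<bar> \<le> 2 * B"
      using B[of "w p + Suc p"] B[of "w p"] by linarith
    then show ?thesis
      by (simp add: window_avg_shift abs_divide divide_right_mono)
  qed
  have "(\<lambda>p. 2 * B / real (Suc p)) \<longlonglongrightarrow> 0"
    using LIMSEQ_Suc[OF lim_const_over_n[of "2 * B"]] by simp
  then show ?thesis
    by (rule Lim_null_comparison[OF always_eventually, rotated]) (use bound in blast)
qed

lemma banach_limit_window_banach_limit:
  assumes U: "is_ultrafilter U" and U_le: "U \<le> sequentially"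
  shows "banach_limit (window_banach_limit U w)"
proof -
  let ?W = "window_banach_limit U w"
  have U_proper: "U \<noteq> bot" using U by (simp add: is_ultrafilter_def)
  note lim = tendsto_window_banach_limit[OF U]
  have linear: "?W (\<lambda>n. a * x n + b * y n) = a * ?W x + b * ?W y" if x: "Bseq x" and y: "Bseq y"
    for x y a b
  proof -
    have "((\<lambda>p. window_avg (\<lambda>n. a * x n + b * y n) (w p) (Suc p)) \<longlongrightarrow> a * ?W x + b * ?W y) U"
      unfolding window_avg_linear by (intro tendsto_intros lim x y)
    then show ?thesis
      using lim[OF Bseq_linear_combination[OF x y]] U_proper by (blast intro: tendsto_unique)
  qed
  have nonneg: "0 \<le> ?W x" if "Bseq x" "\<forall>n. 0 \<le> x n" for x
    using that
    by (intro tendsto_lowerbound[OF lim _ U_proper] always_eventually allI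
        window_avg_lower_bound) auto
  have shift: "?W (\<lambda>n. x (Suc n)) = ?W x" if x: "Bseq x" for x
  proof -
    let ?d = "\<lambda>p. window_avg (\<lambda>n. x (Suc n)) (w p) (Suc p) - window_avg x (w p) (Suc p)"
    have "(?d \<longlongrightarrow> 0) U"
      using window_avg_shift_tendsto_zero[OF x] U_le by (rule tendsto_mono[rotated])
    moreover have "(?d \<longlongrightarrow> ?W (\<lambda>n. x (Suc n)) - ?W x) U"
      using x by (intro tendsto_diff lim) (simp_all add: Bseq_Suc_iff)
    ultimately show ?thesis
      using tendsto_unique[OF U_proper] by fastforce
  qed
  have "((\<lambda>p. window_avg (\<lambda>n. 1) (w p) (Suc p)) \<longlongrightarrow> 1) U"
    by (simp add: window_avg_def)
  then have one: "?W (\<lambda>n. 1) = 1"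
    using U_proper by (simp add: window_banach_limit_def tendsto_Lim)
  show ?thesis
    unfolding banach_limit_def using linear nonneg shift one by blast
qed

text \<open>The tolerance \<open>1 / (k + 1)\<close> and window length \<open>p + 1\<close> keep all quantifiers countable,
  so that flatness is a measurable property.\<close>

definition flat_window_avgs :: "(nat \<Rightarrow> real) \<Rightarrow> bool" where
  "flat_window_avgs x \<longleftrightarrow>
     (\<forall>k::nat. \<exists>p::nat. \<forall>n n'. window_avg x n (Suc p) - window_avg x n' (Suc p) \<le> 1 / real (Suc k))"

lemma banach_limit_near_window_avg:
  assumes L: "banach_limit L" and x: "Bseq x" and "m > 0"
    and osc: "\<And>n n'. window_avg x n m - window_avg x n' m \<le> e"
  shows "\<bar>L x - window_avg x 0 m\<bar> \<le> e"
proof -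
  have "window_avg x 0 m - e \<le> window_avg x n m \<and> window_avg x n m \<le> window_avg x 0 m + e" for n
    using osc[of n 0] osc[of 0 n] by linarith
  then have "window_avg x 0 m - e \<le> L (\<lambda>n. window_avg x n m)"
    and "L (\<lambda>n. window_avg x n m) \<le> window_avg x 0 m + e"
    by (simp_all add: banach_limit_lower_bound[OF L Bseq_window_avg[OF x]]
        banach_limit_upper_bound[OF L Bseq_window_avg[OF x]])
  then show ?thesis
    using banach_limit_window_avg[OF L x \<open>m > 0\<close>] by simp
qed

lemma banach_limits_agree_if_flat_window_avgs:
  assumes L: "banach_limit L" and L': "banach_limit L'" and x: "Bseq x"
    and flat: "flat_window_avgs x"
  shows "L x = L' x"
proof -
  have "\<bar>L x - L' x\<bar> \<le> 2 / real (Suc k)" for k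
  proof -
    obtain p where "\<And>n n'. window_avg x n (Suc p) - window_avg x n' (Suc p) \<le> 1 / real (Suc k)"
      using flat unfolding flat_window_avgs_def by blast
    from banach_limit_near_window_avg[OF L x _ this] banach_limit_near_window_avg[OF L' x _ this]
    show ?thesis by simp
  qed
  moreover have "(\<lambda>k. 2 / real (Suc k)) \<longlonglongrightarrow> 0"
    using LIMSEQ_Suc[OF lim_const_over_n[of 2]] by simp
  ultimately have "\<bar>L x - L' x\<bar> \<le> 0"
    by (intro LIMSEQ_le_const) auto
  then show ?thesis by simp
qed

lemma flat_window_avgs_imp_c_hat:
  assumes "Bseq x" and "flat_window_avgs x"
  shows "x \<in> c_hat"
proof (cases "\<exists>L. banach_limit L")
  case True
  then obtain L0 where "banach_limit L0" by blast
  then have "\<forall>L. banach_limit L \<longrightarrow> L x = L0 x"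
    using assms banach_limits_agree_if_flat_window_avgs by blast
  then show ?thesis using assms(1) by (auto simp: c_hat_def)
qed (use assms(1) in \<open>auto simp: c_hat_def\<close>)

lemma c_hat_imp_flat_window_avgs:
  assumes "x \<in> c_hat"
  shows "flat_window_avgs x"
proof (rule ccontr)
  obtain s where x: "Bseq x" and s: "\<And>L. banach_limit L \<Longrightarrow> L x = s"
    using assms by (auto simp: c_hat_def)
  assume "\<not> flat_window_avgs x"
  then obtain k where
    "\<forall>p. \<exists>n n'. window_avg x n (Suc p) - window_avg x n' (Suc p) > 1 / real (Suc k)"
    by (auto simp: flat_window_avgs_def not_le)
  then obtain w w' where
    gap: "\<And>p. window_avg x (w p) (Suc p) - window_avg x (w' p) (Suc p) > 1 / real (Suc k)"
    by metis
  obtain U where U: "is_ultrafilter U" "U \<le> sequentially"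
    using ex_ultrafilter_le[OF sequentially_bot] by blast
  then have U_proper: "U \<noteq> bot" by (simp add: is_ultrafilter_def)
  have "((\<lambda>p. window_avg x (w p) (Suc p) - window_avg x (w' p) (Suc p))
      \<longlongrightarrow> window_banach_limit U w x - window_banach_limit U w' x) U"
    by (intro tendsto_diff tendsto_window_banach_limit U x)
  then have "1 / real (Suc k) \<le> window_banach_limit U w x - window_banach_limit U w' x"
    using gap
    by (intro tendsto_lowerbound[OF _ _ U_proper]) (auto intro: less_imp_le always_eventually)
  moreover have "window_banach_limit U w x = s" "window_banach_limit U w' x = s"
    using s banach_limit_window_banach_limit[OF U] by auto
  ultimately show False by simp
qed

lemma c_hat_iff_flat_window_avgs: "x \<in> c_hat \<longleftrightarrow> Bseq x \<and> flat_window_avgs x"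
  using c_hat_imp_flat_window_avgs flat_window_avgs_imp_c_hat by (auto simp: c_hat_def)

lemma not_flat_window_avgs:
  assumes "d < c"
    and high: "\<And>m. \<exists>n. \<forall>i<m. c \<le> x (n + i)"
    and low: "\<And>m. \<exists>n. \<forall>i<m. x (n + i) \<le> d"
  shows "\<not> flat_window_avgs x"
proof
  assume flat: "flat_window_avgs x"
  obtain k where k: "1 / real (Suc k) < c - d"
    using reals_Archimedean[of "c - d"] \<open>d < c\<close> by (auto simp: inverse_eq_divide)
  obtain p where p: "\<And>n n'. window_avg x n (Suc p) - window_avg x n' (Suc p) \<le> 1 / real (Suc k)"
    using flat unfolding flat_window_avgs_def by blast
  obtain n n' where "\<forall>i<Suc p. c \<le> x (n + i)" and "\<forall>i<Suc p. x (n' + i) \<le> d"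
    using high low by blast
  then have "c \<le> window_avg x n (Suc p)" and "window_avg x n' (Suc p) \<le> d"
    by (auto intro: window_avg_lower_bound window_avg_upper_bound)
  with p[of n n'] k show False by linarith
qed

section \<open>Independent products\<close>

lemma (in product_prob_space) indep_vars_components:
  assumes "I \<noteq> {}"
  shows "P.indep_vars M (\<lambda>i x. x i) I"
proof -
  have "distr (PiM I M) (PiM I M) (\<lambda>x. \<lambda>i\<in>I. x i) = distr (PiM I M) (PiM I M) (\<lambda>x. x)"
    by (intro distr_cong) (auto simp: space_PiM)
  moreover have "PiM I (\<lambda>i. distr (PiM I M) (M i) (\<lambda>x. x i)) = PiM I M"
    by (intro PiM_cong) (simp_all add: PiM_component)
  ultimately show ?thesis
    by (subst P.indep_vars_iff_distr_eq_PiM'[OF assms]) simp_all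
qed

lemma disjoint_family_blocks: "disjoint_family (\<lambda>j::nat. {j * p..<j * p + p})"
proof -
  have "{j * p..<j * p + p} \<inter> {j' * p..<j' * p + p} = {}" if "j < j'" for j j'
  proof -
    have "j * p + p \<le> j' * p" using that mult_le_mono1[of "Suc j" j' p] by simp
    then show ?thesis by auto
  qed
  then show ?thesis
    unfolding disjoint_family_on_def by (metis Int_commute linorder_neqE_nat)
qed

lemma (in prob_space) prob_PiM_all_blocks_miss:
  fixes B :: "'a set"
  assumes B: "B \<in> events"
  defines "X \<equiv> PiM UNIV (\<lambda>_::nat. M)"
  shows "measure X {x \<in> space X. \<forall>j\<le>J. \<exists>i\<in>{j * p..<j * p + p}. x i \<notin> B}
    = (1 - prob B ^ p) ^ Suc J"
proof -
  have emeasure_B: "emeasure M B = measure M B" by (rule emeasure_eq_measure)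
  interpret product_prob_space "\<lambda>_::nat. M" UNIV ..
  define K where "K j = {j * p..<j * p + p}" for j
  define A where "A j = space (PiM (K j) (\<lambda>_. M)) - PiE (K j) (\<lambda>_. B)" for j
  have indep: "P.indep_vars (\<lambda>j. PiM (K j) (\<lambda>_. M)) (\<lambda>j x. restrict x (K j)) UNIV"
    unfolding K_def
    by (rule P.indep_vars_restrict[OF indep_vars_components]) (simp_all add: disjoint_family_blocks)
  have hit: "{x \<in> space X. \<forall>i\<in>K j. x i \<in> B} \<in> sets X" for j
    unfolding X_def K_def using B by measurable
  have preimage: "(\<lambda>x. restrict x (K j)) -` A j \<inter> space X
      = space X - {x \<in> space X. \<forall>i\<in>K j. x i \<in> B}" for j
    by (auto simp: A_def X_def space_PiM PiE_iff)
  have "measure X {x \<in> space X. \<forall>i\<in>K j. x i \<in> B} = measure M B ^ p" for j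
    using emeasure_PiM_Collect[of "K j" "\<lambda>_. B"] B
    by (simp add: X_def K_def emeasure_B P.emeasure_eq_measure ennreal_power)
  then have miss: "measure X ((\<lambda>x. restrict x (K j)) -` A j \<inter> space X) = 1 - measure M B ^ p" for j
    unfolding preimage using hit by (simp add: X_def P.prob_compl)
  have "{x \<in> space X. \<forall>j\<le>J. \<exists>i\<in>K j. x i \<notin> B} = (\<Inter>j\<in>{..J}. (\<lambda>x. restrict x (K j)) -` A j \<inter> space X)"
    unfolding preimage by auto
  also have "measure X \<dots> = (\<Prod>j\<in>{..J}. measure X ((\<lambda>x. restrict x (K j)) -` A j \<inter> space X))"
    unfolding X_def using B by (intro P.indep_varsD[OF indep]) (auto simp: A_def K_def)
  also have "\<dots> = (1 - measure M B ^ p) ^ Suc J"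
    by (simp add: miss)
  finally show ?thesis by (simp add: K_def)
qed

lemma (in prob_space) prob_PiM_no_window_le:
  fixes B :: "'a set"
  assumes B: "B \<in> events"
  defines "X \<equiv> PiM UNIV (\<lambda>_::nat. M)"
  shows "measure X {x \<in> space X. \<forall>n. \<exists>i<p. x (n + i) \<notin> B} \<le> (1 - prob B ^ p) ^ Suc J"
proof -
  interpret X: prob_space X
    unfolding X_def by (intro prob_space_PiM prob_space_axioms)
  have "{x \<in> space X. \<forall>n. \<exists>i<p. x (n + i) \<notin> B}
      \<subseteq> {x \<in> space X. \<forall>j\<le>J. \<exists>i\<in>{j * p..<j * p + p}. x i \<notin> B}"
  proof safe
    fix x j assume "\<forall>n. \<exists>i<p. x (n + i) \<notin> B"
    then obtain i where "i < p" "x (j * p + i) \<notin> B" by blast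
    then show "\<exists>i\<in>{j * p..<j * p + p}. x i \<notin> B" by (intro bexI[of _ "j * p + i"]) auto
  qed
  moreover have "{x \<in> space X. \<forall>j\<le>J. \<exists>i\<in>{j * p..<j * p + p}. x i \<notin> B} \<in> sets X"
    unfolding X_def using B by measurable
  ultimately have "measure X {x \<in> space X. \<forall>n. \<exists>i<p. x (n + i) \<notin> B}
      \<le> measure X {x \<in> space X. \<forall>j\<le>J. \<exists>i\<in>{j * p..<j * p + p}. x i \<notin> B}"
    by (rule X.finite_measure_mono)
  also have "\<dots> = (1 - prob B ^ p) ^ Suc J"
    unfolding X_def by (rule prob_PiM_all_blocks_miss[OF B])
  finally show ?thesis .
qed

lemma (in prob_space) AE_PiM_exists_window:
  fixes B :: "'a set"
  assumes B: "B \<in> events" and pos: "0 < prob B"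
  shows "AE x in PiM UNIV (\<lambda>_::nat. M). \<exists>n. \<forall>i<p. x (n + i) \<in> B"
proof -
  define X where "X = PiM UNIV (\<lambda>_::nat. M)"
  define N where "N = {x \<in> space X. \<forall>n. \<exists>i<p. x (n + i) \<notin> B}"
  interpret X: prob_space X
    unfolding X_def by (intro prob_space_PiM prob_space_axioms)
  have "(\<lambda>J. (1 - prob B ^ p) ^ Suc J) \<longlonglongrightarrow> 0"
    using pos prob_le_1[of B] by (intro LIMSEQ_Suc LIMSEQ_power_zero) (simp add: power_le_one)
  then have "measure X N \<le> 0"
    by (rule LIMSEQ_le_const) (use prob_PiM_no_window_le[OF B] in \<open>auto simp: N_def X_def\<close>)
  moreover have "N \<in> sets X"
    unfolding N_def X_def using B by measurable
  ultimately have "N \<in> null_sets X"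
    by (simp add: X.emeasure_eq_measure null_sets_def measure_le_0_iff)
  then have "AE x in X. x \<notin> N" by (rule AE_not_in)
  with AE_space show ?thesis
    unfolding X_def[symmetric] by eventually_elim (auto simp: N_def)
qed

lemma tendsto_zero_if_eventually_abs_less_inverse_Suc:
  fixes X :: "nat \<Rightarrow> real"
  assumes small: "\<And>k. eventually (\<lambda>n. \<bar>X n\<bar> < 1 / real (Suc k)) sequentially"
  shows "X \<longlonglongrightarrow> 0"
proof (rule tendstoI)
  fix e :: real assume "0 < e"
  then obtain k where "1 / real (Suc k) < e"
    using reals_Archimedean by (auto simp: inverse_eq_divide)
  with small[of k] show "eventually (\<lambda>n. dist (X n) 0 < e) sequentially"
    by (auto elim: eventually_mono)
qed

context prob_space
begin

lemma prob_sum_deviation_le: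
  fixes X :: "nat \<Rightarrow> 'a \<Rightarrow> real"
  assumes indep: "indep_vars (\<lambda>_. borel) X UNIV"
    and bounded: "\<And>i. AE \<omega> in M. X i \<omega> \<in> {a..b}" and "a < b"
    and centered: "\<And>i. expectation (X i) = 0"
    and "0 < n" and "0 \<le> e"
  shows "prob {\<omega> \<in> space M. real n * e \<le> \<bar>\<Sum>i<n. X i \<omega>\<bar>} \<le> 2 * exp (- 2 * e\<^sup>2 / (b - a)\<^sup>2) ^ n"
proof -
  interpret Hoeffding_ineq M "{..<n}" X "\<lambda>_. a" "\<lambda>_. b" 0
  proof unfold_locales
    show "indep_vars (\<lambda>_. borel) X {..<n}"
      using indep by (rule indep_vars_subset) simp
    show "AE \<omega> in M. X i \<omega> \<in> {a..b}" for i
      by (rule bounded)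
  qed (simp, rule eq_reflection, simp add: centered)
  have "prob {\<omega> \<in> space M. real n * e \<le> \<bar>(\<Sum>i<n. X i \<omega>) - 0\<bar>}
      \<le> 2 * exp (- 2 * (real n * e)\<^sup>2 / (\<Sum>i<n. (b - a)\<^sup>2))"
    using \<open>a < b\<close> \<open>0 < n\<close> \<open>0 \<le> e\<close> by (intro Hoeffding_ineq_abs_ge) auto
  also have "- 2 * (real n * e)\<^sup>2 / (\<Sum>i<n. (b - a)\<^sup>2) = real n * (- 2 * e\<^sup>2 / (b - a)\<^sup>2)"
    using \<open>0 < n\<close> \<open>a < b\<close>
    by (simp add: field_simps power_mult_distrib power2_eq_square[of "real n"])
  also have "exp (real n * (- 2 * e\<^sup>2 / (b - a)\<^sup>2)) = exp (- 2 * e\<^sup>2 / (b - a)\<^sup>2) ^ n"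
    by (rule exp_of_nat_mult)
  finally show ?thesis by simp
qed

lemma AE_eventually_abs_sum_less:
  fixes X :: "nat \<Rightarrow> 'a \<Rightarrow> real"
  assumes indep: "indep_vars (\<lambda>_. borel) X UNIV"
    and bounded: "\<And>i. AE \<omega> in M. X i \<omega> \<in> {a..b}" and "a < b"
    and centered: "\<And>i. expectation (X i) = 0"
    and "0 < e"
  shows "AE \<omega> in M. eventually (\<lambda>n. \<bar>\<Sum>i<n. X i \<omega>\<bar> < real n * e) sequentially"
proof -
  have [measurable]: "X i \<in> borel_measurable M" for i
    using indep unfolding indep_vars_def by blast
  define A where "A n = {\<omega> \<in> space M. real n * e \<le> \<bar>\<Sum>i<n. X i \<omega>\<bar>}" for n
  have A_sets: "A n \<in> sets M" for n
    unfolding A_def by measurable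
  define c where "c = exp (- 2 * e\<^sup>2 / (b - a)\<^sup>2)"
  have bound: "prob (A n) \<le> 2 * c ^ n" for n
  proof (cases "n = 0")
    case True
    then show ?thesis by (simp add: order_trans[OF prob_le_1])
  next
    case False
    then show ?thesis unfolding A_def c_def
      using \<open>0 < e\<close> by (intro prob_sum_deviation_le[OF indep bounded \<open>a < b\<close> centered]) auto
  qed
  have "summable (\<lambda>n. 2 * c ^ n)"
    using \<open>0 < e\<close> \<open>a < b\<close> by (intro summable_mult summable_geometric) (simp add: c_def)
  then have "summable (\<lambda>n. prob (A n))"
    by (rule summable_comparison_test') (simp add: bound)
  then have "AE \<omega> in M. eventually (\<lambda>n. \<omega> \<in> space M - A n) sequentially"
    by (intro borel_cantelli_AE1 A_sets) (simp_all add: emeasure_eq_measure)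
  then show ?thesis
    by eventually_elim (auto elim!: eventually_mono simp: A_def not_le)
qed

lemma AE_averages_tendsto_zero:
  fixes X :: "nat \<Rightarrow> 'a \<Rightarrow> real"
  assumes indep: "indep_vars (\<lambda>_. borel) X UNIV"
    and bounded: "\<And>i. AE \<omega> in M. X i \<omega> \<in> {a..b}" and "a < b"
    and centered: "\<And>i. expectation (X i) = 0"
  shows "AE \<omega> in M. (\<lambda>n. (\<Sum>i<n. X i \<omega>) / real n) \<longlonglongrightarrow> 0"
proof -
  have "AE \<omega> in M. \<forall>k. eventually (\<lambda>n. \<bar>\<Sum>i<n. X i \<omega>\<bar> < real n * (1 / real (Suc k))) sequentially"
    unfolding AE_all_countable
    by (intro allI AE_eventually_abs_sum_less[OF indep bounded \<open>a < b\<close> centered]) simp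
  then show ?thesis
  proof eventually_elim
    case (elim \<omega>)
    have "eventually (\<lambda>n. \<bar>(\<Sum>i<n. X i \<omega>) / real n\<bar> < 1 / real (Suc k)) sequentially" for k
      using elim[rule_format, of k] eventually_gt_at_top[of 0]
      by eventually_elim (simp add: abs_divide divide_less_eq mult.commute)
    then show ?case by (rule tendsto_zero_if_eventually_abs_less_inverse_Suc)
  qed
qed

end

section \<open>The uniform product measure\<close>

lemma space_mu: "space mu = {x. \<forall>n. x n \<in> {-1/2<..<1/2}}"
  by (auto simp: mu_def space_PiM unif_half_def space_restrict_space PiE_def Pi_def extensional_def)

lemma Bseq_if_in_space_mu:
  assumes "x \<in> space mu"
  shows "Bseq x"
proof (rule BseqI')
  fix n
  have "x n \<in> {-1/2<..<1/2}" using assms by (simp add: space_mu)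
  then show "norm (x n) \<le> 1/2" by auto
qed

interpretation unif_half: prob_space unif_half
  unfolding unif_half_def by (rule prob_space_restrict_space) auto

interpretation mu: prob_space mu
  unfolding mu_def by (intro prob_space_PiM unif_half.prob_space_axioms)

lemma measure_unif_half_interval:
  assumes "-1/2 \<le> a" "a \<le> b" "b \<le> 1/2"
  shows "{a<..<b} \<in> sets unif_half" "measure unif_half {a<..<b} = b - a"
proof -
  show "{a<..<b} \<in> sets unif_half"
    using assms by (auto simp: unif_half_def sets_restrict_space_iff)
  then show "measure unif_half {a<..<b} = b - a"
    using assms unfolding unif_half_def by (subst measure_restrict_space) auto
qed

lemma expectation_unif_half: "unif_half.expectation (\<lambda>y. y) = 0"
proof -
  \<comment> \<open>the reflection \<open>x \<mapsto> -x\<close> preserves Lebesgue measure and negates the integral\<close>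
  define I where "I = integral\<^sup>L lborel (\<lambda>x. indicator {-1/2<..<1/2::real} x *\<^sub>R x)"
  have reflect: "(\<lambda>x. indicator {-1/2<..<1/2::real} (0 + -1 * x) *\<^sub>R (0 + -1 * x))
      = (\<lambda>x. - (indicator {-1/2<..<1/2} x *\<^sub>R x))"
    by (auto simp: indicator_def fun_eq_iff)
  have "I = \<bar>-1\<bar> *\<^sub>R integral\<^sup>L lborel
      (\<lambda>x. indicator {-1/2<..<1/2::real} (0 + -1 * x) *\<^sub>R (0 + -1 * x))"
    unfolding I_def by (rule lborel_integral_real_affine) simp
  also have "\<dots> = integral\<^sup>L lborel (\<lambda>x. - (indicator {-1/2<..<1/2} x *\<^sub>R x))"
    by (simp only: reflect) simp
  also have "\<dots> = - I"
    unfolding I_def by (rule integral_minus)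
  finally have "I = 0" by simp
  then show ?thesis
    unfolding unif_half_def I_def by (subst integral_restrict_space) auto
qed

interpretation unif_half_product: product_prob_space "\<lambda>_::nat. unif_half" UNIV
  by unfold_locales

lemma borel_measurable_unif_half [measurable]: "(\<lambda>y. y) \<in> borel_measurable unif_half"
  unfolding unif_half_def by (rule measurable_restrict_space1) simp

lemma borel_measurable_mu_component [measurable]: "(\<lambda>x. x i) \<in> borel_measurable mu"
  unfolding mu_def by measurable

lemma borel_measurable_mu_window_avg [measurable]: "(\<lambda>x. window_avg x n m) \<in> borel_measurable mu"
  unfolding window_avg_def by measurable

lemma indep_vars_mu_components: "mu.indep_vars (\<lambda>_. borel) (\<lambda>i x. x i) UNIV"
proof -
  have "mu.indep_vars (\<lambda>_. unif_half) (\<lambda>i x. x i) UNIV"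
    using unif_half_product.indep_vars_components by (simp add: mu_def)
  from mu.indep_vars_compose2[OF this, of "\<lambda>_ y. y"] show ?thesis by simp
qed

lemma expectation_mu_component: "mu.expectation (\<lambda>x. x i) = 0"
proof -
  have "mu.expectation (\<lambda>x. x i) = unif_half.expectation (\<lambda>y. y)"
    using integral_distr[of "\<lambda>x. x i" mu unif_half "\<lambda>y. y"]
    by (simp add: mu_def unif_half_product.PiM_component)
  then show ?thesis by (simp add: expectation_unif_half)
qed

lemma AE_mu_averages_tendsto_zero: "AE x in mu. (\<lambda>n. (\<Sum>i<n. x i) / real n) \<longlonglongrightarrow> 0"
proof (rule mu.AE_averages_tendsto_zero[OF indep_vars_mu_components _ _ expectation_mu_component])
  show "AE x in mu. x i \<in> {-1/2..1/2}" for i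
    by (rule AE_I2) (auto simp: space_mu less_imp_le)
qed simp

lemma AE_mu_not_flat_window_avgs: "AE x in mu. \<not> flat_window_avgs x"
proof -
  have "AE x in mu. \<forall>m.
      (\<exists>n. \<forall>i<m. x (n + i) \<in> {1/4<..<1/2}) \<and> (\<exists>n. \<forall>i<m. x (n + i) \<in> {-1/2<..<-1/4})"
    unfolding AE_all_countable mu_def
    using measure_unif_half_interval[of "1/4" "1/2"] measure_unif_half_interval[of "-1/2" "-1/4"]
    by (intro allI AE_conjI unif_half.AE_PiM_exists_window) simp_all
  then show ?thesis
  proof eventually_elim
    case (elim x)
    show ?case
    proof (rule not_flat_window_avgs[of "-1/4" "1/4"])
      fix m
      obtain n n' where "\<forall>i<m. x (n + i) \<in> {1/4<..<1/2}" and "\<forall>i<m. x (n' + i) \<in> {-1/2<..<-1/4}"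
        using elim by blast
      then show "\<exists>n. \<forall>i<m. 1/4 \<le> x (n + i)" and "\<exists>n. \<forall>i<m. x (n + i) \<le> -1/4"
        by (auto intro: less_imp_le)
    qed simp
  qed
qed

lemma S0_inter_space_mu: "S0 \<inter> space mu = {x \<in> space mu. (\<lambda>n. (\<Sum>i<n. x i) / real n) \<longlonglongrightarrow> 0}"
  by (auto simp: S0_def Bseq_if_in_space_mu)

lemma c_hat_inter_space_mu: "c_hat \<inter> space mu = {x \<in> space mu. flat_window_avgs x}"
  by (auto simp: c_hat_iff_flat_window_avgs Bseq_if_in_space_mu)

theorem theorem4p1:
  shows "(S0 \<inter> space mu \<in> sets mu \<and> measure mu (S0 \<inter> space mu) = 1) \<and>
         (c_hat \<inter> space mu \<in> sets mu \<and> measure mu (c_hat \<inter> space mu) = 0)"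
proof (intro conjI)
  show S0_sets: "S0 \<inter> space mu \<in> sets mu"
    unfolding S0_inter_space_mu by measurable
  show "measure mu (S0 \<inter> space mu) = 1"
    using S0_sets AE_mu_averages_tendsto_zero unfolding S0_inter_space_mu
    by (simp add: mu.prob_Collect_eq_1)
  show c_hat_sets: "c_hat \<inter> space mu \<in> sets mu"
    unfolding c_hat_inter_space_mu flat_window_avgs_def by measurable
  show "measure mu (c_hat \<inter> space mu) = 0"
    using c_hat_sets AE_mu_not_flat_window_avgs unfolding c_hat_inter_space_mu
    by (simp add: mu.prob_Collect_eq_0)
qed

end
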